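(* $m(3)=10$; that is, the smallest number of edges of a minimal uncolorable $3$-uniform bi-hypergraph is $10$.
   Context: A bi-hypergraph $\mathcal H=(V,E)$ consists of a finite vertex set $V$ and a set $E$ of subsets of $V$, called edges, with no edge contained in another. It is $r$-uniform if every edge has exactly $r$ elements. A mapping $f:V\to\mathbb N$ is a proper coloring of $\mathcal H$ if $1<|f(e)|<|e|$ for every $e\in E$, where $f(e)=\{f(v):v\in e\}$. $\mathcal H$ is colorable if it has a proper coloring, and uncolorable otherwise. A subhypergraph of $\mathcal H$ is a bi-hypergraph $(V',E')$ with $V'\subseteq V$, $E'\subseteq E$. $\mathcal H$ is minimal uncolorable if it is uncolorable but every proper subhypergraph of it is colorable. $m(r)$ denotes the smallest positive integer $m$ for which there exists a minimal uncolorable $r$-uniform bi-hypergraph with exactly $m$ edges. *)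

theory Defs
  imports Main
begin

definition bi_hypergraph :: "'a set \<Rightarrow> 'a set set \<Rightarrow> bool" where
  "bi_hypergraph V E \<longleftrightarrow> finite V \<and> (\<forall>e\<in>E. e \<subseteq> V)
     \<and> (\<forall>e\<in>E. \<forall>e'\<in>E. e \<subseteq> e' \<longrightarrow> e = e')"

definition uniform :: "nat \<Rightarrow> 'a set set \<Rightarrow> bool" where
  "uniform r E \<longleftrightarrow> (\<forall>e\<in>E. card e = r)"

definition proper_coloring :: "'a set set \<Rightarrow> ('a \<Rightarrow> nat) \<Rightarrow> bool" where
  "proper_coloring E f \<longleftrightarrow> (\<forall>e\<in>E. 1 < card (f ` e) \<and> card (f ` e) < card e)"

definition colorable :: "'a set \<Rightarrow> 'a set set \<Rightarrow> bool" where
  "colorable V E \<longleftrightarrow> (\<exists>f :: 'a \<Rightarrow> nat. proper_coloring E f)"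

definition subhypergraph :: "'a set \<Rightarrow> 'a set set \<Rightarrow> 'a set \<Rightarrow> 'a set set \<Rightarrow> bool" where
  "subhypergraph V' E' V E \<longleftrightarrow> bi_hypergraph V' E' \<and> V' \<subseteq> V \<and> E' \<subseteq> E"

definition minimal_uncolorable :: "'a set \<Rightarrow> 'a set set \<Rightarrow> bool" where
  "minimal_uncolorable V E \<longleftrightarrow> bi_hypergraph V E \<and> \<not> colorable V E
     \<and> (\<forall>V' E'. subhypergraph V' E' V E \<and> (V', E') \<noteq> (V, E) \<longrightarrow> colorable V' E')"

text \<open>m(r): least positive m such that some minimal uncolorable r-uniform
  bi-hypergraph has exactly m edges (vertices taken from nat, which loses no
  generality since vertex sets are finite).\<close>
definition m_min :: "nat \<Rightarrow> nat" where
  "m_min r = (LEAST m. 0 < m \<and> (\<exists>(V :: nat set) E. minimal_uncolorable V E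
                 \<and> uniform r E \<and> card E = m))"

end

theory Submission
  imports Defs
begin

text \<open>
  The complete 3-uniform hypergraph on five vertices is minimal uncolorable: at most two colours
  leave a monochromatic triple, three or more a rainbow triple, and after deleting an edge T one
  may colour T against the rest, since any two triples of a 5-set meet.

  Conversely every 3-uniform hypergraph with at most 9 edges is colorable, by induction on the
  number of vertices. Two vertices lying in no common edge may be identified. Otherwise the at most
  27 pairs inside edges cover all pairs of vertices, so there are at most 7 vertices. With at most 6
  vertices (padded to exactly 6) the 20 triples form 10 complementary pairs, one of which avoids E
  and yields a 2-colouring. With 7 vertices some vertex v has degree at most 3, so its edges are
  three triples {v,a_i,b_i} partitioning the vertex set. If every 2-colouring separating a
  transversal of the pairs and every 3-colouring giving v its own colour fails, then E contains an
  edge from each of 4 complementary pairs of transversals and, for each i, an edge avoiding v, a_i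
  and b_i; with the three edges through v these are 10 distinct edges.
\<close>

lemma card_3_subset_eq:
  assumes "card e = 3" "e \<subseteq> {a, b, c}"
  shows "e = {a, b, c}"
proof -
  have "card {a, b, c} \<le> 3" using card_length[of "[a, b, c]"] by simp
  then show ?thesis using assms card_subset_eq[of "{a, b, c}" e] card_mono[of "{a, b, c}" e] by simp
qed

lemma card_3_not_subset_doubleton: "card e = 3 \<Longrightarrow> \<not> e \<subseteq> {a, b}"
  using card_mono[of "{a, b}" e] card_length[of "[a, b]"] by fastforce

lemma proper_coloring_two_classes:
  assumes "\<forall>e\<in>E. 2 < card e \<and> e \<inter> S \<noteq> {} \<and> \<not> e \<subseteq> S"
  shows "proper_coloring E (\<lambda>z. if z \<in> S then 0 else 1)"
  unfolding proper_coloring_def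
proof
  fix e assume "e \<in> E"
  then have "2 < card e" "(\<lambda>z. if z \<in> S then 0::nat else 1) ` e = {0, 1}"
    using assms by force+
  then show "1 < card ((\<lambda>z. if z \<in> S then 0::nat else 1) ` e)
      \<and> card ((\<lambda>z. if z \<in> S then 0::nat else 1) ` e) < card e"
    by simp
qed

definition triples :: "'a set \<Rightarrow> 'a set set" where
  "triples V = {e. e \<subseteq> V \<and> card e = 3}"

lemma triples_mono: "V \<subseteq> W \<Longrightarrow> triples V \<subseteq> triples W"
  unfolding triples_def by blast

lemma ex_rainbow_triple:
  assumes "3 \<le> card (f ` V)"
  shows "\<exists>e\<in>triples V. card (f ` e) = 3"
proof -
  obtain S where S: "S \<subseteq> f ` V" "card S = 3"
    by (rule obtain_subset_with_card_n[OF assms])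
  let ?e = "inv_into V f ` S"
  have "f ` ?e = S" by (rule image_inv_into_cancel[OF refl S(1)])
  moreover have "card ?e = 3" using card_image[OF inj_on_inv_into[OF S(1)]] S(2) by simp
  moreover have "?e \<subseteq> V" using S(1) by (auto intro: inv_into_into)
  ultimately show ?thesis unfolding triples_def using S(2) by (intro bexI[of _ ?e]) simp_all
qed

lemma ex_monochromatic_triple:
  assumes "finite V" "5 \<le> card V" "card (f ` V) \<le> 2"
  shows "\<exists>e\<in>triples V. card (f ` e) = 1"
proof -
  have "\<exists>c. 3 \<le> card {x\<in>V. f x = c}"
  proof (rule ccontr)
    assume "\<nexists>c. 3 \<le> card {x\<in>V. f x = c}"
    then have fibre: "card {x\<in>V. f x = c} \<le> 2" for c using not_less_eq_eq by fastforce
    have "card V \<le> card (\<Union>c\<in>f ` V. {x\<in>V. f x = c})"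
      using assms(1) by (intro card_mono) auto
    also have "\<dots> \<le> (\<Sum>c\<in>f ` V. card {x\<in>V. f x = c})"
      using assms(1) by (intro card_UN_le) simp
    also have "\<dots> \<le> 2 * card (f ` V)"
      using sum_bounded_above[of "f ` V" "\<lambda>c. card {x\<in>V. f x = c}" 2] fibre by simp
    finally show False using assms by linarith
  qed
  then obtain c where "3 \<le> card {x\<in>V. f x = c}" ..
  then obtain e where "e \<subseteq> {x\<in>V. f x = c}" "card e = 3"
    by (rule obtain_subset_with_card_n)
  moreover from this have "e \<noteq> {}" by auto
  ultimately have "e \<in> triples V" "f ` e = {c}" unfolding triples_def by auto
  then show ?thesis by (intro bexI[of _ e]) simp_all
qed

lemma card_triples: "finite V \<Longrightarrow> card (triples V) = card V choose 3"
  unfolding triples_def by (rule n_subsets)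

lemma Union_triples:
  assumes "finite V" "3 \<le> card V"
  shows "\<Union>(triples V) = V"
proof
  show "\<Union>(triples V) \<subseteq> V" unfolding triples_def by blast
  show "V \<subseteq> \<Union>(triples V)"
  proof
    fix x assume "x \<in> V"
    then have "2 \<le> card (V - {x})" using assms by simp
    then obtain p where "p \<subseteq> V - {x}" "card p = 2" "finite p"
      by (rule obtain_subset_with_card_n)
    moreover from this have "x \<notin> p" by blast
    ultimately have "insert x p \<in> triples V" using \<open>x \<in> V\<close> unfolding triples_def by auto
    then show "x \<in> \<Union>(triples V)" by blast
  qed
qed

lemma bi_hypergraph_triples: "finite V \<Longrightarrow> bi_hypergraph V (triples V)"
  unfolding bi_hypergraph_def triples_def
  by (metis (mono_tags, lifting) card_subset_eq finite_subset mem_Collect_eq)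

lemma not_proper_coloring_triples:
  assumes "finite V" "5 \<le> card V"
  shows "\<not> proper_coloring (triples V) f"
proof
  assume proper: "proper_coloring (triples V) f"
  have card_triple: "card e = 3" if "e \<in> triples V" for e using that unfolding triples_def by simp
  show False
  proof (cases "3 \<le> card (f ` V)")
    case True
    with proper card_triple show False
      using ex_rainbow_triple unfolding proper_coloring_def by fastforce
  next
    case False
    with proper assms show False
      using ex_monochromatic_triple[of V f] unfolding proper_coloring_def by fastforce
  qed
qed

lemma proper_coloring_triples_minus_edge:
  assumes "finite V" "card V \<le> 5" "T \<in> triples V" "E \<subseteq> triples V - {T}"
  shows "proper_coloring E (\<lambda>z. if z \<in> T then 0 else 1)"
proof (rule proper_coloring_two_classes, intro ballI conjI)
  fix e assume "e \<in> E"
  then have e: "e \<subseteq> V" "card e = 3" "e \<noteq> T" and T: "T \<subseteq> V" "card T = 3"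
    using assms(3,4) unfolding triples_def by auto
  have fin: "finite e" "finite T" using e T assms(1) finite_subset by auto
  show "2 < card e" using e by simp
  have "e \<union> T \<subseteq> V" using e T by blast
  then have "card (e \<union> T) \<le> 5" using card_mono[OF assms(1)] assms(2) by (metis le_trans)
  then show "e \<inter> T \<noteq> {}" using card_Un_Int[OF fin] e T by auto
  show "\<not> e \<subseteq> T" using card_subset_eq[OF fin(2)] e T by metis
qed

lemma minimal_uncolorable_triples:
  assumes "finite V" "card V = 5"
  shows "minimal_uncolorable V (triples V)"
  unfolding minimal_uncolorable_def colorable_def
proof (intro conjI allI impI)
  show "bi_hypergraph V (triples V)" using assms(1) by (rule bi_hypergraph_triples)
  show "\<nexists>f. proper_coloring (triples V) f" using not_proper_coloring_triples assms by force
  fix V' E' assume sub: "subhypergraph V' E' V (triples V) \<and> (V', E') \<noteq> (V, triples V)"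
  have "E' \<noteq> triples V"
  proof
    assume "E' = triples V"
    moreover have "\<Union>E' \<subseteq> V'" using sub unfolding subhypergraph_def bi_hypergraph_def by blast
    ultimately have "V' = V" using sub Union_triples[OF assms(1)] assms(2)
      unfolding subhypergraph_def by auto
    with sub \<open>E' = triples V\<close> show False by simp
  qed
  then obtain T where "T \<in> triples V" "E' \<subseteq> triples V - {T}"
    using sub unfolding subhypergraph_def by blast
  with assms have "proper_coloring E' (\<lambda>z. if z \<in> T then 0 else 1)"
    by (intro proper_coloring_triples_minus_edge) simp_all
  then show "\<exists>f. proper_coloring E' f" by (rule exI[of "proper_coloring E'"])
qed

lemma colorable_six_vertices:
  assumes "finite W" "card W = 6" "finite E" "card E \<le> 9" "E \<subseteq> triples W"
  shows "\<exists>f. proper_coloring E f"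
proof -
  have "\<exists>T\<in>triples W. T \<notin> E \<and> W - T \<notin> E"
  proof (rule ccontr)
    assume no_split: "\<not> ?thesis"
    have "triples W \<subseteq> E \<union> (\<lambda>S. W - S) ` E"
    proof
      fix T assume "T \<in> triples W"
      then have "T = W - (W - T)" unfolding triples_def by blast
      then show "T \<in> E \<union> (\<lambda>S. W - S) ` E" using \<open>T \<in> triples W\<close> no_split by blast
    qed
    then have "card (triples W) \<le> card (E \<union> (\<lambda>S. W - S) ` E)"
      using assms(3) by (intro card_mono) auto
    also have "\<dots> \<le> card E + card ((\<lambda>S. W - S) ` E)" by (rule card_Un_le)
    also have "\<dots> \<le> 18" using card_image_le[OF assms(3), of "\<lambda>S. W - S"] assms(4) by linarith
    finally have "card (triples W) \<le> 18" .
    moreover have "card (triples W) = 20"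
      using assms(1,2) by (simp add: card_triples numeral_eq_Suc)
    ultimately show False by simp
  qed
  then obtain T where T: "T \<subseteq> W" "card T = 3" "T \<notin> E" "W - T \<notin> E"
    unfolding triples_def by blast
  have "card (W - T) = 3" using T assms(1,2) by (simp add: card_Diff_subset finite_subset)
  have "proper_coloring E (\<lambda>z. if z \<in> T then 0 else 1)"
  proof (rule proper_coloring_two_classes, intro ballI conjI)
    fix e assume "e \<in> E"
    then have e: "e \<subseteq> W" "card e = 3" "e \<noteq> T" "e \<noteq> W - T"
      using assms(5) T unfolding triples_def by auto
    show "2 < card e" using e by simp
    show "e \<inter> T \<noteq> {}"
    proof
      assume "e \<inter> T = {}"
      then have "e \<subseteq> W - T" using e(1) by blast
      then show False using card_subset_eq[of "W - T" e] assms(1) e \<open>card (W - T) = 3\<close> by simp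
    qed
    show "\<not> e \<subseteq> T"
      using card_subset_eq[of T e] finite_subset[OF T(1) assms(1)] T(2) e by auto
  qed
  then show ?thesis by blast
qed

lemma colorable_at_most_six_vertices:
  fixes E :: "'a set set"
  assumes "infinite (UNIV :: 'a set)" "finite V" "card V \<le> 6"
    and "finite E" "card E \<le> 9" "E \<subseteq> triples V"
  shows "\<exists>f. proper_coloring E f"
proof -
  obtain A where A: "finite A" "card A = 6 - card V" "A \<subseteq> - V"
    using infinite_arbitrarily_large[OF Diff_infinite_finite[OF assms(2,1)]]
    by (metis Compl_eq_Diff_UNIV)
  have "V \<inter> A = {}" using A(3) by blast
  then have "card (V \<union> A) = 6" using A(1,2) assms(2,3) card_Un_disjoint[of V A] by simp
  moreover have "E \<subseteq> triples (V \<union> A)" using assms(6) triples_mono[of V "V \<union> A"] by blast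
  ultimately show ?thesis using A(1) assms(2,4,5) by (intro colorable_six_vertices[of "V \<union> A"]) auto
qed

lemma card_covered_pairs_le:
  assumes "finite V" "finite E" "E \<subseteq> triples V"
    and covered: "\<forall>x\<in>V. \<forall>y\<in>V. x \<noteq> y \<longrightarrow> (\<exists>e\<in>E. x \<in> e \<and> y \<in> e)"
  shows "card V choose 2 \<le> 3 * card E"
proof -
  have edge: "card e = 3" "finite e" if "e \<in> E" for e
  proof -
    show "card e = 3" using that assms(3) unfolding triples_def by blast
    then show "finite e" by (intro card_ge_0_finite) simp
  qed
  have pair_count: "card {p. p \<subseteq> e \<and> card p = 2} = 3" if "e \<in> E" for e
    using edge[OF that] n_subsets[of e 2] by (simp add: numeral_eq_Suc)
  have "card V choose 2 = card {p. p \<subseteq> V \<and> card p = 2}" using n_subsets[OF assms(1)] by simp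
  also have "\<dots> \<le> card (\<Union>e\<in>E. {p. p \<subseteq> e \<and> card p = 2})"
  proof (rule card_mono)
    show "finite (\<Union>e\<in>E. {p. p \<subseteq> e \<and> card p = 2})"
    proof (rule finite_UN_I[OF assms(2)])
      fix e assume "e \<in> E"
      then show "finite {p. p \<subseteq> e \<and> card p = 2}"
        using edge(2) by (auto intro: finite_subset[of _ "Pow e"])
    qed
    show "{p. p \<subseteq> V \<and> card p = 2} \<subseteq> (\<Union>e\<in>E. {p. p \<subseteq> e \<and> card p = 2})"
    proof
      fix p assume "p \<in> {p. p \<subseteq> V \<and> card p = 2}"
      then obtain x y where "p = {x, y}" "x \<noteq> y" "x \<in> V" "y \<in> V" by (auto simp: card_2_iff)
      moreover obtain e where "e \<in> E" "x \<in> e" "y \<in> e" using covered calculation by blast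
      ultimately show "p \<in> (\<Union>e\<in>E. {p. p \<subseteq> e \<and> card p = 2})" by auto
    qed
  qed
  also have "\<dots> \<le> (\<Sum>e\<in>E. card {p. p \<subseteq> e \<and> card p = 2})" using assms(2) by (rule card_UN_le)
  also have "\<dots> = 3 * card E" using pair_count by simp
  finally show ?thesis .
qed

lemma ex_vertex_degree_le:
  assumes "finite V" "V \<noteq> {}" "finite E" "E \<subseteq> triples V"
  shows "\<exists>v\<in>V. card V * card {e\<in>E. v \<in> e} \<le> 3 * card E"
proof (rule ccontr)
  assume "\<not> ?thesis"
  then have "(\<Sum>v\<in>V. 3 * card E) < (\<Sum>v\<in>V. card V * card {e\<in>E. v \<in> e})"
    using assms(1,2) by (intro sum_strict_mono) auto
  also have "\<dots> = card V * (3 * card E)"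
  proof -
    have "card {v\<in>V. v \<in> e} = 3" if "e \<in> E" for e
    proof -
      have "{v\<in>V. v \<in> e} = e" using that assms(4) unfolding triples_def by blast
      then show ?thesis using that assms(4) unfolding triples_def by auto
    qed
    then show ?thesis
      using sum_multicount[OF assms(1,3), of "\<lambda>v e. v \<in> e" 3]
        by (simp add: sum_distrib_left[symmetric])
  qed
  finally show False by simp
qed

definition identify :: "'a \<Rightarrow> 'a \<Rightarrow> 'a \<Rightarrow> 'a" where
  "identify y x z = (if z = y then x else z)"

lemma inj_on_identify: "\<not> (x \<in> e \<and> y \<in> e) \<Longrightarrow> inj_on (identify y x) e"
  unfolding inj_on_def identify_def by auto

lemma Union_image_identify:
  "x \<in> \<Union>E \<Longrightarrow> x \<noteq> y \<Longrightarrow> \<Union>((`) (identify y x) ` E) = \<Union>E - {y}"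
  unfolding identify_def by auto

lemma proper_coloring_identify:
  assumes "\<forall>e\<in>E. \<not> (x \<in> e \<and> y \<in> e)" "proper_coloring ((`) (identify y x) ` E) f"
  shows "proper_coloring E (f \<circ> identify y x)"
  unfolding proper_coloring_def
proof
  fix e assume "e \<in> E"
  then have "card (identify y x ` e) = card e"
    using assms(1) by (simp add: card_image inj_on_identify)
  moreover have
    "1 < card (f ` identify y x ` e) \<and> card (f ` identify y x ` e) < card (identify y x ` e)"
    using assms(2) \<open>e \<in> E\<close> unfolding proper_coloring_def by blast
  ultimately show "1 < card ((f \<circ> identify y x) ` e) \<and> card ((f \<circ> identify y x) ` e) < card e"
    by (simp add: image_comp)
qed

lemma card_3_obtain_third:
  assumes "card e = 3" "x \<in> e" "y \<in> e" "x \<noteq> y"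
  obtains z where "e = {x, y, z}"
proof -
  have "finite e" using assms(1) by (intro card_ge_0_finite) simp
  then have "card (e - {x, y}) = 1" using assms by (subst card_Diff_subset) auto
  then obtain z where "e - {x, y} = {z}" by (rule card_1_singletonE)
  then have "e = {x, y, z}" using assms(2,3) by blast
  then show thesis by (rule that)
qed

lemma obtain_three_star_edges:
  assumes "finite V" "card V = 7" "E \<subseteq> triples V" "v \<in> V"
    and covered: "\<forall>x\<in>V. \<forall>y\<in>V. x \<noteq> y \<longrightarrow> (\<exists>e\<in>E. x \<in> e \<and> y \<in> e)"
  obtains a1 b1 a2 b2 a3 b3 where "{v, a1, b1} \<in> E" "{v, a2, b2} \<in> E" "{v, a3, b3} \<in> E"
    "a2 \<notin> {v, a1, b1}" "a3 \<notin> {v, a1, b1, a2, b2}"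
proof -
  have edge_through_v: "\<exists>b. {v, a, b} \<in> E" if "a \<in> V" "a \<noteq> v" for a
  proof -
    obtain e where "e \<in> E" "v \<in> e" "a \<in> e" using covered \<open>a \<in> V\<close> \<open>a \<noteq> v\<close> \<open>v \<in> V\<close> by metis
    moreover from this have "card e = 3" using assms(3) unfolding triples_def by blast
    ultimately show ?thesis using card_3_obtain_third \<open>a \<noteq> v\<close> by metis
  qed
  have fresh: "\<exists>a\<in>V. a \<notin> set xs" if "length xs < 7" for xs :: "'a list"
    using card_mono[OF finite_set, of V xs] card_length[of xs] that assms(2) by auto
  obtain a1 where a1: "a1 \<in> V" "a1 \<noteq> v" using fresh[of "[v]"] by auto
  then obtain b1 where e1: "{v, a1, b1} \<in> E" using edge_through_v by blast
  obtain a2 where a2: "a2 \<in> V" "a2 \<notin> {v, a1, b1}" using fresh[of "[v, a1, b1]"] by auto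
  then obtain b2 where e2: "{v, a2, b2} \<in> E" using edge_through_v by blast
  obtain a3 where a3: "a3 \<in> V" "a3 \<notin> {v, a1, b1, a2, b2}"
    using fresh[of "[v, a1, b1, a2, b2]"] by auto
  then obtain b3 where e3: "{v, a3, b3} \<in> E" using edge_through_v by blast
  from e1 e2 e3 a2(2) a3(2) show thesis by (rule that)
qed

lemma seven_vertex_star:
  assumes "finite V" "card V = 7" "E \<subseteq> triples V" "finite E"
    and covered: "\<forall>x\<in>V. \<forall>y\<in>V. x \<noteq> y \<longrightarrow> (\<exists>e\<in>E. x \<in> e \<and> y \<in> e)"
    and "v \<in> V" "card {e\<in>E. v \<in> e} \<le> 3"
  obtains a1 b1 a2 b2 a3 b3 where "distinct [v, a1, b1, a2, b2, a3, b3]"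
    "V = {v, a1, b1, a2, b2, a3, b3}" "{e\<in>E. v \<in> e} = {{v, a1, b1}, {v, a2, b2}, {v, a3, b3}}"
proof -
  obtain a1 b1 a2 b2 a3 b3 where e1: "{v, a1, b1} \<in> E" and e2: "{v, a2, b2} \<in> E"
    and e3: "{v, a3, b3} \<in> E" and a2: "a2 \<notin> {v, a1, b1}" and a3: "a3 \<notin> {v, a1, b1, a2, b2}"
    by (rule obtain_three_star_edges[OF assms(1-3,6) covered])
  let ?D = "{{v, a1, b1}, {v, a2, b2}, {v, a3, b3}}"
  have star: "{e\<in>E. v \<in> e} = ?D"
  proof (rule sym, rule card_subset_eq)
    show "finite {e\<in>E. v \<in> e}" using assms(4) by simp
    show "?D \<subseteq> {e\<in>E. v \<in> e}" using e1 e2 e3 by simp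
    have "{v, a2, b2} \<noteq> {v, a1, b1}" "{v, a3, b3} \<noteq> {v, a1, b1}" "{v, a3, b3} \<noteq> {v, a2, b2}"
      using a2 a3 by blast+
    then have "card ?D = 3" by simp
    then show "card ?D = card {e\<in>E. v \<in> e}"
      using card_mono[OF \<open>finite {e\<in>E. v \<in> e}\<close> \<open>?D \<subseteq> _\<close>] assms(7) by simp
  qed
  have "V = {v, a1, b1, a2, b2, a3, b3}"
  proof
    have "{v, a1, b1} \<subseteq> V" "{v, a2, b2} \<subseteq> V" "{v, a3, b3} \<subseteq> V"
      using e1 e2 e3 assms(3) unfolding triples_def by blast+
    then show "{v, a1, b1, a2, b2, a3, b3} \<subseteq> V" by blast
    show "V \<subseteq> {v, a1, b1, a2, b2, a3, b3}"
    proof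
      fix w assume "w \<in> V"
      show "w \<in> {v, a1, b1, a2, b2, a3, b3}"
      proof (cases "w = v")
        case False
        then obtain e where "e \<in> E" "v \<in> e" "w \<in> e" using covered \<open>w \<in> V\<close> assms(6) by metis
        then have "e \<in> ?D" unfolding star[symmetric] by simp
        with \<open>w \<in> e\<close> show ?thesis by auto
      qed simp
    qed
  qed
  moreover have "distinct [v, a1, b1, a2, b2, a3, b3]"
  proof (rule card_distinct)
    have "set [v, a1, b1, a2, b2, a3, b3] = V" using calculation by simp
    then show "card (set [v, a1, b1, a2, b2, a3, b3]) = length [v, a1, b1, a2, b2, a3, b3]"
      using assms(2) by (simp only:) simp
  qed
  ultimately show thesis using star by (intro that)
qed

lemma proper_coloring_star_transversal:
  assumes "distinct [v, a1, b1, a2, b2, a3, b3]" "E \<subseteq> triples {v, a1, b1, a2, b2, a3, b3}"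
    and star: "{e\<in>E. v \<in> e} \<subseteq> {{v, a1, b1}, {v, a2, b2}, {v, a3, b3}}"
    and "{a1, a2, a3} \<notin> E" "{b1, b2, b3} \<notin> E"
  shows "proper_coloring E (\<lambda>z. if z \<in> {v, a1, a2, a3} then 0 else 1)"
proof (rule proper_coloring_two_classes, intro ballI)
  fix e assume "e \<in> E"
  then have e: "card e = 3" "e \<subseteq> {v, a1, b1, a2, b2, a3, b3}"
    using assms(2) unfolding triples_def by auto
  have "e \<inter> {v, a1, a2, a3} \<noteq> {} \<and> \<not> e \<subseteq> {v, a1, a2, a3}"
  proof (cases "v \<in> e")
    case True
    then have "e \<in> {{v, a1, b1}, {v, a2, b2}, {v, a3, b3}}" using star \<open>e \<in> E\<close> by blast
    then show ?thesis using assms(1) by auto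
  next
    case False
    then have "e \<noteq> {a1, a2, a3}" "e \<noteq> {b1, b2, b3}" "e \<subseteq> {a1, b1, a2, b2, a3, b3}"
      using assms(4,5) e(2) \<open>e \<in> E\<close> by auto
    then have "\<not> e \<subseteq> {b1, b2, b3}" "\<not> e \<subseteq> {a1, a2, a3}"
      using card_3_subset_eq[OF e(1)] by metis+
    then show ?thesis using \<open>e \<subseteq> {a1, b1, a2, b2, a3, b3}\<close> False by blast
  qed
  with e(1) show "2 < card e \<and> e \<inter> {v, a1, a2, a3} \<noteq> {} \<and> \<not> e \<subseteq> {v, a1, a2, a3}" by simp
qed

lemma proper_coloring_star_pair:
  assumes "distinct [v, a1, b1, a2, b2, a3, b3]" "E \<subseteq> triples {v, a1, b1, a2, b2, a3, b3}"
    and star: "{e\<in>E. v \<in> e} \<subseteq> {{v, a1, b1}, {v, a2, b2}, {v, a3, b3}}"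
    and "\<forall>e\<in>E. \<not> e \<subseteq> {a2, b2, a3, b3}"
  shows "proper_coloring E (\<lambda>z. if z = v then 2 else if z \<in> {a2, b2, a3, b3} then 0 else 1)"
    (is "proper_coloring E ?f")
  unfolding proper_coloring_def
proof
  fix e assume "e \<in> E"
  then have e: "card e = 3" "e \<subseteq> {v, a1, b1, a2, b2, a3, b3}"
    using assms(2) unfolding triples_def by auto
  have "card (?f ` e) = 2"
  proof (cases "v \<in> e")
    case True
    then have "e \<in> {{v, a1, b1}, {v, a2, b2}, {v, a3, b3}}" using star \<open>e \<in> E\<close> by blast
    then show ?thesis using assms(1) by auto
  next
    case False
    obtain x where "x \<in> e" "x \<in> {a1, b1}" using assms(4) \<open>e \<in> E\<close> e(2) False by blast
    moreover obtain y where "y \<in> e" "y \<in> {a2, b2, a3, b3}"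
      using card_3_not_subset_doubleton[OF e(1), of a1 b1] e(2) False by blast
    ultimately have "?f ` e = {0, 1}" using assms(1) e(2) False by auto
    then show ?thesis by simp
  qed
  with e(1) show "1 < card (?f ` e) \<and> card (?f ` e) < card e" by simp
qed

lemma uncolorable_seven_star_edges:
  assumes dist: "distinct [v, a1, b1, a2, b2, a3, b3]"
    and sub: "E \<subseteq> triples {v, a1, b1, a2, b2, a3, b3}"
    and star: "{e\<in>E. v \<in> e} \<subseteq> {{v, a1, b1}, {v, a2, b2}, {v, a3, b3}}"
    and uncolorable: "\<nexists>f. proper_coloring E f"
  shows "{a1, a2, a3} \<in> E \<or> {b1, b2, b3} \<in> E" "{a1, a2, b3} \<in> E \<or> {b1, b2, a3} \<in> E"
    "{a1, b2, a3} \<in> E \<or> {b1, a2, b3} \<in> E" "{a1, b2, b3} \<in> E \<or> {b1, a2, a3} \<in> E"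
    "\<exists>u\<in>E. u \<subseteq> {a2, b2, a3, b3}" "\<exists>u\<in>E. u \<subseteq> {a1, b1, a3, b3}" "\<exists>u\<in>E. u \<subseteq> {a1, b1, a2, b2}"
proof -
  have transversal: "{x1, x2, x3} \<in> E \<or> {y1, y2, y3} \<in> E"
    and pair_free: "\<exists>u\<in>E. u \<subseteq> {x2, y2, x3, y3}"
    if "distinct [v, x1, y1, x2, y2, x3, y3]" "E \<subseteq> triples {v, x1, y1, x2, y2, x3, y3}"
      "{e\<in>E. v \<in> e} \<subseteq> {{v, x1, y1}, {v, x2, y2}, {v, x3, y3}}" for x1 y1 x2 y2 x3 y3
    using proper_coloring_star_transversal[OF that] proper_coloring_star_pair[OF that] uncolorable
    by blast+
  show "{a1, a2, a3} \<in> E \<or> {b1, b2, b3} \<in> E" by (rule transversal[OF dist sub star])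
  show "{a1, a2, b3} \<in> E \<or> {b1, b2, a3} \<in> E"
    using transversal[of a1 b1 a2 b2 b3 a3] dist sub star by (auto simp: insert_commute)
  show "{a1, b2, a3} \<in> E \<or> {b1, a2, b3} \<in> E"
    using transversal[of a1 b1 b2 a2 a3 b3] dist sub star by (auto simp: insert_commute)
  show "{a1, b2, b3} \<in> E \<or> {b1, a2, a3} \<in> E"
    using transversal[of a1 b1 b2 a2 b3 a3] dist sub star by (auto simp: insert_commute)
  show "\<exists>u\<in>E. u \<subseteq> {a2, b2, a3, b3}" by (rule pair_free[OF dist sub star])
  show "\<exists>u\<in>E. u \<subseteq> {a1, b1, a3, b3}"
    using pair_free[of a2 b2 a1 b1 a3 b3] dist sub star by (auto simp: insert_commute)
  show "\<exists>u\<in>E. u \<subseteq> {a1, b1, a2, b2}"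
    using pair_free[of a3 b3 a1 b1 a2 b2] dist sub star by (auto simp: insert_commute)
qed

lemma distinct_seven_star_edges:
  assumes dist: "distinct [v, a1, b1, a2, b2, a3, b3]"
    and s: "s1 = {a1, a2, a3} \<or> s1 = {b1, b2, b3}" "s2 = {a1, a2, b3} \<or> s2 = {b1, b2, a3}"
      "s3 = {a1, b2, a3} \<or> s3 = {b1, a2, b3}" "s4 = {a1, b2, b3} \<or> s4 = {b1, a2, a3}"
    and u: "card u1 = 3" "u1 \<subseteq> {a2, b2, a3, b3}" "card u2 = 3" "u2 \<subseteq> {a1, b1, a3, b3}"
      "card u3 = 3" "u3 \<subseteq> {a1, b1, a2, b2}"
  shows "distinct [{v, a1, b1}, {v, a2, b2}, {v, a3, b3}, s1, s2, s3, s4, u1, u2, u3]"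
proof -
  have meets: "u \<inter> {x, y} \<noteq> {}" if "card u = 3" "u \<subseteq> {x, y, z, w}" for u :: "'a set" and x y z w
    using card_3_not_subset_doubleton[OF that(1), of z w] that(2) by blast
  have u_meets: "u1 \<inter> {a2, b2} \<noteq> {}" "u1 \<inter> {a3, b3} \<noteq> {}" "u2 \<inter> {a1, b1} \<noteq> {}"
      "u2 \<inter> {a3, b3} \<noteq> {}" "u3 \<inter> {a1, b1} \<noteq> {}" "u3 \<inter> {a2, b2} \<noteq> {}"
    using meets[of u1 a2 b2 a3 b3] meets[of u1 a3 b3 a2 b2] meets[of u2 a1 b1 a3 b3]
      meets[of u2 a3 b3 a1 b1] meets[of u3 a1 b1 a2 b2] meets[of u3 a2 b2 a1 b1] u
    by (simp_all add: insert_commute)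
  have u_misses: "u1 \<inter> {a1, b1} = {}" "u2 \<inter> {a2, b2} = {}" "u3 \<inter> {a3, b3} = {}"
    and v_not_in: "v \<notin> u1" "v \<notin> u2" "v \<notin> u3" "v \<notin> s1" "v \<notin> s2" "v \<notin> s3" "v \<notin> s4"
    using dist u s by auto
  have s_meets: "\<forall>s\<in>{s1, s2, s3, s4}. s \<inter> {a1, b1} \<noteq> {} \<and> s \<inter> {a2, b2} \<noteq> {} \<and> s \<inter> {a3, b3} \<noteq> {}"
    using s by auto
  \<comment> \<open>The four transversal pairs differ in which of a2, a3 lie on the side of a1.\<close>
  have s_pattern: "(a1 \<in> s1 \<longleftrightarrow> a2 \<in> s1) \<and> (a1 \<in> s1 \<longleftrightarrow> a3 \<in> s1)"
      "(a1 \<in> s2 \<longleftrightarrow> a2 \<in> s2) \<and> \<not> (a1 \<in> s2 \<longleftrightarrow> a3 \<in> s2)"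
      "\<not> (a1 \<in> s3 \<longleftrightarrow> a2 \<in> s3) \<and> (a1 \<in> s3 \<longleftrightarrow> a3 \<in> s3)"
      "\<not> (a1 \<in> s4 \<longleftrightarrow> a2 \<in> s4) \<and> \<not> (a1 \<in> s4 \<longleftrightarrow> a3 \<in> s4)"
    using dist s by auto
  let ?stars = "[{v, a1, b1}, {v, a2, b2}, {v, a3, b3}]"
    and ?ss = "[s1, s2, s3, s4]" and ?us = "[u1, u2, u3]"
  have "distinct ?stars" using dist by auto
  moreover have "distinct ?ss" using s_pattern by auto
  moreover have "distinct ?us" using u_meets u_misses by auto
  moreover have "set ?stars \<inter> set (?ss @ ?us) = {}" using v_not_in by auto
  moreover have "set ?ss \<inter> set ?us = {}" using s_meets u_misses by auto
  ultimately have "distinct (?stars @ ?ss @ ?us)" by (simp only: distinct_append)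
  then show ?thesis by (simp only: append_Cons append_Nil)
qed

lemma colorable_seven_star:
  assumes dist: "distinct [v, a1, b1, a2, b2, a3, b3]"
    and sub: "E \<subseteq> triples {v, a1, b1, a2, b2, a3, b3}"
    and star: "{e\<in>E. v \<in> e} = {{v, a1, b1}, {v, a2, b2}, {v, a3, b3}}"
    and "finite E" "card E \<le> 9"
  shows "\<exists>f. proper_coloring E f"
proof (rule ccontr)
  assume "\<nexists>f. proper_coloring E f"
  note forced = uncolorable_seven_star_edges[OF dist sub equalityD1[OF star] this]
  obtain s1 where s1: "s1 \<in> E" "s1 = {a1, a2, a3} \<or> s1 = {b1, b2, b3}" using forced(1) by blast
  obtain s2 where s2: "s2 \<in> E" "s2 = {a1, a2, b3} \<or> s2 = {b1, b2, a3}" using forced(2) by blast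
  obtain s3 where s3: "s3 \<in> E" "s3 = {a1, b2, a3} \<or> s3 = {b1, a2, b3}" using forced(3) by blast
  obtain s4 where s4: "s4 \<in> E" "s4 = {a1, b2, b3} \<or> s4 = {b1, a2, a3}" using forced(4) by blast
  obtain u1 where u1: "u1 \<in> E" "u1 \<subseteq> {a2, b2, a3, b3}" using forced(5) by blast
  obtain u2 where u2: "u2 \<in> E" "u2 \<subseteq> {a1, b1, a3, b3}" using forced(6) by blast
  obtain u3 where u3: "u3 \<in> E" "u3 \<subseteq> {a1, b1, a2, b2}" using forced(7) by blast
  have "card u1 = 3" "card u2 = 3" "card u3 = 3"
    using u1(1) u2(1) u3(1) sub unfolding triples_def by auto
  let ?L = "[{v, a1, b1}, {v, a2, b2}, {v, a3, b3}, s1, s2, s3, s4, u1, u2, u3]"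
  from \<open>card u1 = 3\<close> \<open>card u2 = 3\<close> \<open>card u3 = 3\<close> have "distinct ?L"
    using u1(2) u2(2) u3(2) by (intro distinct_seven_star_edges[OF dist s1(2) s2(2) s3(2) s4(2)])
  moreover have "set ?L \<subseteq> E" using star s1 s2 s3 s4 u1 u2 u3 by auto
  ultimately have "length ?L \<le> card E" using card_mono[OF \<open>finite E\<close>] distinct_card by metis
  with \<open>card E \<le> 9\<close> show False by simp
qed

lemma colorable_if_pairs_covered:
  fixes E :: "'a set set"
  assumes "infinite (UNIV :: 'a set)" "finite V" "finite E" "card E \<le> 9" "E \<subseteq> triples V"
    and covered: "\<forall>x\<in>V. \<forall>y\<in>V. x \<noteq> y \<longrightarrow> (\<exists>e\<in>E. x \<in> e \<and> y \<in> e)"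
  shows "\<exists>f. proper_coloring E f"
proof -
  have pairs: "card V choose 2 \<le> 27"
    using card_covered_pairs_le[OF assms(2,3,5) covered] assms(4) by simp
  have "card V \<le> 7"
  proof (rule ccontr)
    assume "\<not> card V \<le> 7"
    then have "8 * 7 \<le> card V * (card V - 1)" by (intro mult_le_mono) auto
    then have "28 \<le> card V choose 2" by (simp add: choose_two)
    with pairs show False by simp
  qed
  then consider "card V \<le> 6" | "card V = 7" by linarith
  then show ?thesis
  proof cases
    case 1
    then show ?thesis by (rule colorable_at_most_six_vertices[OF assms(1,2) _ assms(3-5)])
  next
    case 2
    then obtain v where v: "v \<in> V" "card V * card {e\<in>E. v \<in> e} \<le> 3 * card E"
      using ex_vertex_degree_le[OF assms(2) _ assms(3,5)] by fastforce
    then have "card {e\<in>E. v \<in> e} \<le> 3" using 2 assms(4) by simp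
    then obtain a1 b1 a2 b2 a3 b3 where star:
      "distinct [v, a1, b1, a2, b2, a3, b3]" "V = {v, a1, b1, a2, b2, a3, b3}"
      "{e\<in>E. v \<in> e} = {{v, a1, b1}, {v, a2, b2}, {v, a3, b3}}"
      by (rule seven_vertex_star[OF assms(2) 2 assms(5,3) covered v(1)])
    from assms(5) have "E \<subseteq> triples {v, a1, b1, a2, b2, a3, b3}" unfolding star(2) .
    then show ?thesis using colorable_seven_star[OF star(1) _ star(3) assms(3,4)] by blast
  qed
qed

lemma colorable_if_card_le_9:
  fixes E :: "'a set set"
  assumes "infinite (UNIV :: 'a set)" "finite E" "\<forall>e\<in>E. card e = 3" "card E \<le> 9"
  shows "\<exists>f. proper_coloring E f"
  using assms(2-)
proof (induction "card (\<Union>E)" arbitrary: E rule: less_induct)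
  case less
  define V where "V = \<Union>E"
  have "finite V" unfolding V_def
    using less.prems(1,2) by (intro finite_Union) (auto intro: card_ge_0_finite)
  have E_triples: "E \<subseteq> triples V" unfolding V_def triples_def using less.prems(2) by blast
  show ?case
  proof (cases "\<exists>x\<in>V. \<exists>y\<in>V. x \<noteq> y \<and> (\<forall>e\<in>E. \<not> (x \<in> e \<and> y \<in> e))")
    case True
    then obtain x y where xy: "x \<in> V" "y \<in> V" "x \<noteq> y" "\<forall>e\<in>E. \<not> (x \<in> e \<and> y \<in> e)" by blast
    let ?E' = "(`) (identify y x) ` E"
    have "card (\<Union>?E') < card (\<Union>E)"
      using Union_image_identify[of x E y] xy(1-3) \<open>finite V\<close> card_Diff1_less unfolding V_def
        by metis
    moreover have "finite ?E'" using less.prems(1) by simp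
    moreover have "\<forall>e\<in>?E'. card e = 3"
      using less.prems(2) xy(4) by (auto simp: card_image inj_on_identify)
    moreover have "card ?E' \<le> 9"
      using card_image_le[OF less.prems(1), of "(`) (identify y x)"] less.prems(3) by linarith
    ultimately obtain f where "proper_coloring ?E' f" using less.hyps[of ?E'] by blast
    then have "proper_coloring E (f \<circ> identify y x)" by (rule proper_coloring_identify[OF xy(4)])
    then show ?thesis by (rule exI[of "proper_coloring E"])
  next
    case False
    then have "\<forall>x\<in>V. \<forall>y\<in>V. x \<noteq> y \<longrightarrow> (\<exists>e\<in>E. x \<in> e \<and> y \<in> e)" by blast
    then show ?thesis
      by (rule colorable_if_pairs_covered[OF assms(1) \<open>finite V\<close> less.prems(1,3) E_triples])
  qed
qed

theorem theorem1p2: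
  shows "m_min 3 = 10"
  unfolding m_min_def
proof (rule Least_equality)
  let ?V = "{0..<5 :: nat}"
  have "minimal_uncolorable ?V (triples ?V)" by (rule minimal_uncolorable_triples) simp_all
  moreover have "uniform 3 (triples ?V)" unfolding uniform_def triples_def by simp
  moreover have "card (triples ?V) = 10" by (simp add: card_triples numeral_eq_Suc)
  ultimately show
    "0 < (10::nat) \<and> (\<exists>(V :: nat set) E. minimal_uncolorable V E \<and> uniform 3 E \<and> card E = 10)"
    by auto
next
  fix m assume "0 < m \<and> (\<exists>(V :: nat set) E. minimal_uncolorable V E \<and> uniform 3 E \<and> card E = m)"
  then obtain V :: "nat set" and E where E: "minimal_uncolorable V E" "uniform 3 E" "card E = m"
    by blast
  then have "finite E" "\<nexists>f. proper_coloring E f"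
    unfolding minimal_uncolorable_def bi_hypergraph_def colorable_def
    by (auto intro: finite_subset[of E "Pow V"])
  moreover have "\<forall>e\<in>E. card e = 3" using E(2) unfolding uniform_def .
  ultimately show "10 \<le> m"
    using colorable_if_card_le_9[OF infinite_UNIV_nat, of E] E(3) by fastforce
qed

end
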